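(* Let $r\geq 2$ and let $G$ be an $r$-uniform hypergraph with vertex set $\{1,\ldots,n\}$ and $m$ edges. If $\mathbf{x}\in\Delta^{n-1}$ is an eigenvector to $\mu(G)$, then \[ \mu(G)\leq m\,\sigma(\mathbf{x})^r. \]
   Context: $\Delta^{n-1}=\{\mathbf{x}\in\mathbb{R}^n: x_i\geq0 \text{ for all } i,\ \sum_i x_i=1\}$. For $G$ with edge set $E$, define \[ P_G(\mathbf{x})=\sum_{\{i_1,\ldots,i_r\}\in E}x_{i_1}\cdots x_{i_r} \qquad\text{and}\qquad \mu(G)=\max_{\mathbf{x}\in\Delta^{n-1}}P_G(\mathbf{x}). \] A vector $\mathbf{x}\in\Delta^{n-1}$ with $P_G(\mathbf{x})=\mu(G)$ is called an eigenvector to $\mu(G)$. $\sigma(\mathbf{x})=x_1^{x_1}\cdots x_n^{x_n}$, with the convention $0^0=1$. *)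

theory Defs
  imports "HOL-Analysis.Analysis"
begin

definition uniform_hypergraph :: "nat \<Rightarrow> nat \<Rightarrow> nat set set \<Rightarrow> bool" where
  "uniform_hypergraph r n E \<longleftrightarrow> (\<forall>e\<in>E. e \<subseteq> {1..n} \<and> card e = r)"

definition std_simplex :: "nat \<Rightarrow> (nat \<Rightarrow> real) set" where
  "std_simplex n = {x. (\<forall>i\<in>{1..n}. x i \<ge> 0) \<and> (\<Sum>i\<in>{1..n}. x i) = 1}"

definition PG :: "nat set set \<Rightarrow> (nat \<Rightarrow> real) \<Rightarrow> real" where
  "PG E x = (\<Sum>e\<in>E. \<Prod>i\<in>e. x i)"

definition mu :: "nat \<Rightarrow> nat set set \<Rightarrow> real" where
  "mu n E = (SUP x\<in>std_simplex n. PG E x)"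

definition eigenvector :: "nat \<Rightarrow> nat set set \<Rightarrow> (nat \<Rightarrow> real) \<Rightarrow> bool" where
  "eigenvector n E x \<longleftrightarrow> x \<in> std_simplex n \<and> PG E x = mu n E"

definition sigma :: "nat \<Rightarrow> (nat \<Rightarrow> real) \<Rightarrow> real" where
  "sigma n x = (\<Prod>i\<in>{1..n}. if x i = 0 then 1 else x i powr x i)"

end

theory Submission
  imports Defs
begin

text \<open>Write \<open>P\<^sub>e = \<Prod>\<^bsub>i\<in>e\<^esub> x\<^sub>i\<close> and \<open>\<mu> = \<Sum>\<^sub>e P\<^sub>e\<close>. Since \<open>x\<close> maximises \<open>P\<^sub>G\<close>
  on the simplex, moving mass between two vertices of its support does not change \<open>P\<^sub>G\<close>
  to first order, so the partial derivatives \<open>\<partial>\<^sub>iP\<^sub>G(x)\<close> agree on the support; by Euler's identity for the homogeneous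
  polynomial \<open>P\<^sub>G\<close> this forces \<open>\<Sum>\<^bsub>e\<ni>i\<^esub> P\<^sub>e = r \<mu> x\<^sub>i\<close> for every vertex \<open>i\<close>.
  Consequently \<open>\<Sum>\<^sub>e P\<^sub>e ln P\<^sub>e = \<Sum>\<^sub>i ln x\<^sub>i \<Sum>\<^bsub>e\<ni>i\<^esub> P\<^sub>e = r \<mu> ln \<sigma>(x)\<close>. On the other hand Gibbs'
  inequality for the \<open>m\<close> weights \<open>P\<^sub>e\<close> gives \<open>\<Sum>\<^sub>e P\<^sub>e ln P\<^sub>e \<ge> \<mu> ln (\<mu>/m)\<close>, whence
  \<open>ln (\<mu>/m) \<le> r ln \<sigma>(x)\<close>.\<close>

lemma uniform_hypergraph_finite:
  assumes "uniform_hypergraph r n E"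
  shows "finite E"
proof (rule finite_subset)
  show "E \<subseteq> Pow {1..n}"
    using assms by (auto simp: uniform_hypergraph_def)
qed simp

lemma uniform_hypergraph_edge_finite:
  assumes "uniform_hypergraph r n E" "e \<in> E"
  shows "finite e"
  using assms by (auto simp: uniform_hypergraph_def intro: finite_subset)

lemma std_simplex_le_one:
  assumes "x \<in> std_simplex n" "k \<in> {1..n}"
  shows "x k \<le> 1"
proof -
  have "x k \<le> (\<Sum>i\<in>{1..n}. x i)"
    using assms by (intro member_le_sum) (auto simp: std_simplex_def)
  then show ?thesis
    using assms(1) by (simp add: std_simplex_def)
qed

lemma std_simplex_ex_pos:
  assumes "x \<in> std_simplex n"
  obtains i where "i \<in> {1..n}" "x i > 0"
proof -
  have "\<exists>i\<in>{1..n}. x i \<noteq> 0"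
  proof (rule ccontr)
    assume "\<not> ?thesis"
    then show False
      using assms by (simp add: std_simplex_def)
  qed
  then show ?thesis
    using assms that by (force simp: std_simplex_def)
qed

lemma PG_le_card:
  assumes "uniform_hypergraph r n E" "y \<in> std_simplex n"
  shows "PG E y \<le> real (card E)"
proof -
  have "PG E y \<le> (\<Sum>e\<in>E. 1)"
    unfolding PG_def
  proof (rule sum_mono)
    fix e assume "e \<in> E"
    then have "e \<subseteq> {1..n}"
      using assms(1) by (auto simp: uniform_hypergraph_def)
    then show "(\<Prod>i\<in>e. y i) \<le> 1"
      using assms(2) std_simplex_le_one[OF assms(2)]
      by (intro prod_le_1) (auto simp: std_simplex_def)
  qed
  then show ?thesis by simp
qed

lemma PG_le_mu:
  assumes "uniform_hypergraph r n E" "y \<in> std_simplex n"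
  shows "PG E y \<le> mu n E"
  unfolding mu_def
proof (rule cSUP_upper[OF assms(2)])
  show "bdd_above (PG E ` std_simplex n)"
    using PG_le_card[OF assms(1)] by (auto intro!: bdd_aboveI[where M = "real (card E)"])
qed

definition PG_partial :: "nat set set \<Rightarrow> (nat \<Rightarrow> real) \<Rightarrow> nat \<Rightarrow> real" where
  "PG_partial E x i = (\<Sum>e\<in>E. if i \<in> e then \<Prod>k\<in>e - {i}. x k else 0)"

lemma has_field_derivative_PG_along:
  assumes "finite V" and sub: "\<forall>e\<in>E. e \<subseteq> V"
  shows "((\<lambda>t. PG E (\<lambda>k. x k + t * c k)) has_field_derivative
           (\<Sum>k\<in>V. c k * PG_partial E x k)) (at 0)"
proof -
  have fine: "finite e" if "e \<in> E" for e
    using sub that \<open>finite V\<close> by (auto intro: finite_subset)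
  have "((\<lambda>t. PG E (\<lambda>k. x k + t * c k)) has_field_derivative
          (\<Sum>e\<in>E. \<Sum>k\<in>e. c k * (\<Prod>l\<in>e - {k}. x l + 0 * c l))) (at 0)"
    unfolding PG_def
  proof (intro DERIV_sum has_field_derivative_prod)
    fix k
    show "((\<lambda>t. x k + t * c k) has_field_derivative c k) (at 0)"
      by (auto intro!: derivative_eq_intros)
  qed
  also have "(\<Sum>e\<in>E. \<Sum>k\<in>e. c k * (\<Prod>l\<in>e - {k}. x l + 0 * c l))
      = (\<Sum>e\<in>E. \<Sum>k\<in>V. if k \<in> e then c k * (\<Prod>l\<in>e - {k}. x l) else 0)"
  proof (rule sum.cong[OF refl])
    fix e assume "e \<in> E"
    then have "{k \<in> V. k \<in> e} = e"
      using sub by auto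
    then show "(\<Sum>k\<in>e. c k * (\<Prod>l\<in>e - {k}. x l + 0 * c l))
        = (\<Sum>k\<in>V. if k \<in> e then c k * (\<Prod>l\<in>e - {k}. x l) else 0)"
      using sum.inter_filter[OF \<open>finite V\<close>, of _ "\<lambda>k. k \<in> e"] by simp
  qed
  also have "\<dots> = (\<Sum>k\<in>V. c k * PG_partial E x k)"
    unfolding PG_partial_def sum_distrib_left
    by (subst sum.swap) (auto intro!: sum.cong)
  finally show ?thesis .
qed

lemma perturbation_in_std_simplex:
  assumes x: "x \<in> std_simplex n" and "i \<in> {1..n}" "j \<in> {1..n}" "i \<noteq> j"
    and "\<bar>t\<bar> \<le> x i" "\<bar>t\<bar> \<le> x j"
  defines "c \<equiv> \<lambda>k. of_bool (k = i) - of_bool (k = j) :: real"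
  shows "(\<lambda>k. x k + t * c k) \<in> std_simplex n"
proof -
  have "(\<Sum>k\<in>{1..n}. c k) = 0"
    using assms(2,3) by (simp add: c_def sum_subtractf)
  then have "(\<Sum>k\<in>{1..n}. x k + t * c k) = 1"
    using x by (simp add: sum.distrib flip: sum_distrib_left add: std_simplex_def)
  moreover have "\<forall>k\<in>{1..n}. x k + t * c k \<ge> 0"
    using x assms(4-6) by (auto simp: std_simplex_def c_def)
  ultimately show ?thesis
    by (simp add: std_simplex_def)
qed

lemma eigenvector_PG_partial_eq:
  assumes U: "uniform_hypergraph r n E" and ev: "eigenvector n E x"
    and i: "i \<in> {1..n}" "x i > 0" and j: "j \<in> {1..n}" "x j > 0"
  shows "PG_partial E x i = PG_partial E x j"
proof (cases "i = j")
  case False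
  define c where "c = (\<lambda>k. of_bool (k = i) - of_bool (k = j) :: real)"
  define f where "f = (\<lambda>t. PG E (\<lambda>k. x k + t * c k))"
  have der: "(f has_field_derivative (\<Sum>k\<in>{1..n}. c k * PG_partial E x k)) (at 0)"
    unfolding f_def using U
    by (intro has_field_derivative_PG_along) (auto simp: uniform_hypergraph_def)
  have dval: "(\<Sum>k\<in>{1..n}. c k * PG_partial E x k) = PG_partial E x i - PG_partial E x j"
    using i j by (simp add: c_def left_diff_distrib sum_subtractf)
  have loc: "\<forall>t. \<bar>0 - t\<bar> < min (x i) (x j) \<longrightarrow> f t \<le> f 0"
  proof (intro allI impI)
    fix t assume t: "\<bar>0 - t\<bar> < min (x i) (x j)"
    have "f t \<le> mu n E"
      unfolding f_def c_def using ev i j False t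
      by (intro PG_le_mu[OF U] perturbation_in_std_simplex) (auto simp: eigenvector_def)
    also have "\<dots> = f 0"
      using ev by (simp add: f_def eigenvector_def)
    finally show "f t \<le> f 0" .
  qed
  have "(\<Sum>k\<in>{1..n}. c k * PG_partial E x k) = 0"
    using i j by (intro DERIV_local_max[OF der _ loc]) simp
  then show ?thesis
    unfolding dval by simp
qed simp

lemma mult_PG_partial:
  assumes "\<forall>e\<in>E. finite e"
  shows "x i * PG_partial E x i = (\<Sum>e\<in>E. if i \<in> e then \<Prod>k\<in>e. x k else 0)"
  unfolding PG_partial_def sum_distrib_left
  using assms by (intro sum.cong refl) (auto simp: prod.remove)

lemma PG_Euler:
  assumes U: "uniform_hypergraph r n E"
  shows "(\<Sum>i\<in>{1..n}. x i * PG_partial E x i) = r * PG E x"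
proof -
  have fine: "\<forall>e\<in>E. finite e"
    using uniform_hypergraph_edge_finite[OF U] by blast
  have "(\<Sum>i\<in>{1..n}. x i * PG_partial E x i)
      = (\<Sum>e\<in>E. \<Sum>i\<in>{1..n}. if i \<in> e then \<Prod>k\<in>e. x k else 0)"
    unfolding mult_PG_partial[OF fine] by (rule sum.swap)
  also have "\<dots> = (\<Sum>e\<in>E. r * (\<Prod>k\<in>e. x k))"
  proof (rule sum.cong[OF refl])
    fix e assume "e \<in> E"
    then have "e \<subseteq> {1..n}" "card e = r"
      using U by (auto simp: uniform_hypergraph_def)
    then have "{i \<in> {1..n}. i \<in> e} = e" "card e = r"
      by auto
    then show "(\<Sum>i\<in>{1..n}. if i \<in> e then \<Prod>k\<in>e. x k else 0) = r * (\<Prod>k\<in>e. x k)"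
      using sum.inter_filter[of "{1..n}" "\<lambda>_. \<Prod>k\<in>e. x k" "\<lambda>i. i \<in> e"] by simp
  qed
  also have "\<dots> = r * PG E x"
    by (simp add: PG_def sum_distrib_left)
  finally show ?thesis .
qed

lemma eigenvector_degree_eq:
  assumes U: "uniform_hypergraph r n E" and ev: "eigenvector n E x" and i: "i \<in> {1..n}"
  shows "(\<Sum>e\<in>E. if i \<in> e then \<Prod>k\<in>e. x k else 0) = r * mu n E * x i"
proof -
  have xs: "x \<in> std_simplex n"
    using ev by (simp add: eigenvector_def)
  obtain i0 where i0: "i0 \<in> {1..n}" "x i0 > 0"
    using std_simplex_ex_pos[OF xs] .
  define c where "c = PG_partial E x i0"
  have xc: "x k * PG_partial E x k = x k * c" if "k \<in> {1..n}" for k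
  proof (cases "x k = 0")
    case False
    then have "x k > 0"
      using xs that by (force simp: std_simplex_def)
    then show ?thesis
      using eigenvector_PG_partial_eq[OF U ev that _ i0] by (simp add: c_def)
  qed simp
  have "r * mu n E = (\<Sum>k\<in>{1..n}. x k * PG_partial E x k)"
    using PG_Euler[OF U] ev by (simp add: eigenvector_def)
  also have "\<dots> = (\<Sum>k\<in>{1..n}. x k) * c"
    by (simp add: xc sum_distrib_right)
  also have "\<dots> = c"
    using xs by (simp add: std_simplex_def)
  finally show ?thesis
    using xc[OF i] mult_PG_partial uniform_hypergraph_edge_finite[OF U]
    by (metis mult.commute)
qed

lemma mult_ln_diff_le:
  fixes a p :: real
  assumes "0 \<le> p" "0 < a"
  shows "p * ln a - p * ln p \<le> a - p"
proof (cases "p = 0")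
  case False
  then have p: "p > 0"
    using assms(1) by simp
  have "p * ln a - p * ln p = p * ln (a / p)"
    using p assms(2) by (simp add: ln_div right_diff_distrib)
  also have "\<dots> \<le> p * (a / p - 1)"
    using p assms(2) by (intro mult_left_mono ln_le_minus_one) auto
  also have "\<dots> = a - p"
    using p by (simp add: field_simps)
  finally show ?thesis .
qed (use assms in simp)

lemma Gibbs_inequality:
  fixes p :: "'a \<Rightarrow> real"
  assumes "finite S" "S \<noteq> {}" and nonneg: "\<forall>e\<in>S. p e \<ge> 0"
  shows "(\<Sum>e\<in>S. p e) * ln ((\<Sum>e\<in>S. p e) / card S) \<le> (\<Sum>e\<in>S. p e * ln (p e))"
proof (cases "(\<Sum>e\<in>S. p e) = 0")
  case True
  then have "\<forall>e\<in>S. p e = 0"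
    using sum_nonneg_eq_0_iff[OF \<open>finite S\<close>] nonneg by blast
  then show ?thesis
    using True by simp
next
  case False
  define a where "a = (\<Sum>e\<in>S. p e) / card S"
  have "a > 0"
    using False nonneg assms(1,2) by (simp add: a_def sum_nonneg order.strict_iff_order card_gt_0_iff)
  then have "(\<Sum>e\<in>S. p e * ln a - p e * ln (p e)) \<le> (\<Sum>e\<in>S. a - p e)"
    using nonneg by (intro sum_mono mult_ln_diff_le) auto
  also have "\<dots> = 0"
    using assms(1,2) by (simp add: sum_subtractf a_def)
  finally show ?thesis
    by (simp add: sum_subtractf a_def flip: sum_distrib_right)
qed

lemma prod_mult_ln_prod:
  fixes x :: "'a \<Rightarrow> real"
  assumes "finite e" "\<forall>i\<in>e. x i \<ge> 0"
  shows "(\<Prod>i\<in>e. x i) * ln (\<Prod>i\<in>e. x i) = (\<Sum>i\<in>e. (\<Prod>i\<in>e. x i) * ln (x i))"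
proof (cases "\<exists>i\<in>e. x i = 0")
  case False
  then have "ln (\<Prod>i\<in>e. x i) = (\<Sum>i\<in>e. ln (x i))"
    using assms by (intro ln_prod) (auto simp: order.strict_iff_order)
  then show ?thesis
    by (simp add: sum_distrib_left)
next
  case True
  then have "(\<Prod>i\<in>e. x i) = 0"
    using assms(1) by simp
  then show ?thesis
    by simp
qed

text \<open>Since \<open>0 * ln 0 = 0\<close> in Isabelle, no restriction to the support of \<open>x\<close> is needed.\<close>
lemma eigenvector_sum_mult_ln:
  assumes U: "uniform_hypergraph r n E" and ev: "eigenvector n E x"
  shows "(\<Sum>e\<in>E. (\<Prod>k\<in>e. x k) * ln (\<Prod>k\<in>e. x k))
       = r * mu n E * (\<Sum>i\<in>{1..n}. x i * ln (x i))"
proof -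
  have nonneg: "\<forall>i\<in>{1..n}. x i \<ge> 0"
    using ev by (simp add: eigenvector_def std_simplex_def)
  have "(\<Sum>e\<in>E. (\<Prod>k\<in>e. x k) * ln (\<Prod>k\<in>e. x k))
      = (\<Sum>e\<in>E. \<Sum>i\<in>{1..n}. if i \<in> e then (\<Prod>k\<in>e. x k) * ln (x i) else 0)"
  proof (rule sum.cong[OF refl])
    fix e assume "e \<in> E"
    then have e: "e \<subseteq> {1..n}" "finite e"
      using U by (auto simp: uniform_hypergraph_def intro: finite_subset)
    then have "{i \<in> {1..n}. i \<in> e} = e"
      by auto
    then show "(\<Prod>k\<in>e. x k) * ln (\<Prod>k\<in>e. x k)
        = (\<Sum>i\<in>{1..n}. if i \<in> e then (\<Prod>k\<in>e. x k) * ln (x i) else 0)"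
      using prod_mult_ln_prod[of e x] e nonneg
        sum.inter_filter[of "{1..n}" "\<lambda>i. (\<Prod>k\<in>e. x k) * ln (x i)" "\<lambda>i. i \<in> e"]
      by auto
  qed
  also have "\<dots> = (\<Sum>i\<in>{1..n}. ln (x i) * (\<Sum>e\<in>E. if i \<in> e then \<Prod>k\<in>e. x k else 0))"
    by (subst sum.swap) (auto simp: sum_distrib_left intro!: sum.cong)
  also have "\<dots> = (\<Sum>i\<in>{1..n}. ln (x i) * (r * mu n E * x i))"
    using eigenvector_degree_eq[OF U ev] by simp
  also have "\<dots> = r * mu n E * (\<Sum>i\<in>{1..n}. x i * ln (x i))"
    by (simp add: sum_distrib_left algebra_simps)
  finally show ?thesis .
qed

lemma sigma_pos: "sigma n x > 0"
  unfolding sigma_def by (intro prod_pos) simp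

lemma ln_sigma: "ln (sigma n x) = (\<Sum>i\<in>{1..n}. x i * ln (x i))"
  unfolding sigma_def by (subst ln_prod) (auto simp: ln_powr intro: sum.cong)

theorem lemma8:
  fixes r n :: nat and E :: "nat set set" and x :: "nat \<Rightarrow> real"
  assumes "r \<ge> 2"
    and "uniform_hypergraph r n E"
    and "eigenvector n E x"
  shows "mu n E \<le> real (card E) * sigma n x ^ r"
proof (cases "mu n E > 0")
  case True
  note U = assms(2) and ev = assms(3)
  have finE: "finite E"
    using uniform_hypergraph_finite[OF U] .
  have mu: "mu n E = (\<Sum>e\<in>E. \<Prod>k\<in>e. x k)"
    using ev by (simp add: eigenvector_def PG_def)
  have "E \<noteq> {}"
    using True mu by auto
  have "mu n E * ln (mu n E / card E) \<le> (\<Sum>e\<in>E. (\<Prod>k\<in>e. x k) * ln (\<Prod>k\<in>e. x k))"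
    unfolding mu
  proof (rule Gibbs_inequality[OF finE \<open>E \<noteq> {}\<close>])
    show "\<forall>e\<in>E. (\<Prod>k\<in>e. x k) \<ge> 0"
      using U ev by (force simp: uniform_hypergraph_def eigenvector_def std_simplex_def
          intro: prod_nonneg)
  qed
  also have "\<dots> = r * mu n E * ln (sigma n x)"
    by (simp add: eigenvector_sum_mult_ln[OF U ev] ln_sigma)
  finally have "ln (mu n E / card E) \<le> ln (sigma n x ^ r)"
    using True by (simp add: ln_realpow)
  then have "mu n E / card E \<le> sigma n x ^ r"
    using True \<open>E \<noteq> {}\<close> finE sigma_pos by (simp add: card_gt_0_iff)
  then show ?thesis
    using \<open>E \<noteq> {}\<close> finE by (simp add: divide_le_eq card_gt_0_iff mult.commute)
next
  case False
  have "0 \<le> real (card E) * sigma n x ^ r"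
    using sigma_pos[of n x] by simp
  with False show ?thesis
    by linarith
qed

end
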